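(* For any positive integers $M,N,K,S$, any $\epsilon_0>0$ and any data matrices $\mathbf{Y}^{(1)},\dots,\mathbf{Y}^{(S)}\in\mathbb{R}^{M\times N}$, the solution sets $\Omega^*$ and $\dot\Omega$ are nonempty and compact.
   Context: $\mathcal{O}(M)$ is the group of real $M\times M$ orthogonal matrices. For $\Phi\in\mathcal{O}(M)$ set $\mathbb{E}_S([\Phi\mathbf{Y}]_{mn}^2)=\frac1S\sum_{s=1}^S[\Phi\mathbf{Y}^{(s)}]_{mn}^2$, and let $\mathbb{E}_S(|\Phi\mathbf{Y}|^{\circ2})$ be the $M\times N$ matrix with these entries. $F_K=\{(\mathbf{W},\mathbf{H})\in\mathbb{R}_+^{M\times K}\times\mathbb{R}_+^{K\times N}:\ \|\mathbf{w}_k\|_1=1\ \text{for all }k\}$, where $\mathbf{w}_k$ is the $k$-th column of $\mathbf{W}$. For entrywise nonnegative $M\times N$ matrices $\mathbf{A},\mathbf{B}$, $D_{\epsilon_0}(\mathbf{A}|\mathbf{B})=\sum_{m,n}\Big(\frac{A_{mn}+\epsilon_0}{B_{mn}+\epsilon_0}-\log\frac{A_{mn}+\epsilon_0}{B_{mn}+\epsilon_0}-1\Big)$. Define $C_S(\Phi,\mathbf{W},\mathbf{H})=\sum_{m,n}\Big(\frac{\mathbb{E}_S([\Phi\mathbf{Y}]_{mn}^2)+\epsilon_0}{[\mathbf{W}\mathbf{H}]_{mn}+\epsilon_0}+\log([\mathbf{W}\mathbf{H}]_{mn}+\epsilon_0)\Big)$, $L_S(\Phi)=MN+\sum_{m,n}\log(\mathbb{E}_S([\Phi\mathbf{Y}]_{mn}^2)+\epsilon_0)$,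 $I_S(\Phi,\mathbf{W},\mathbf{H})=D_{\epsilon_0}(\mathbb{E}_S(|\Phi\mathbf{Y}|^{\circ2})\,|\,\mathbf{W}\mathbf{H})$ (so that $C_S=L_S+I_S$). The TL-NMF solution set is $\Omega^*=\arg\min\{C_S(\Phi,\mathbf{W},\mathbf{H}):\Phi\in\mathcal{O}(M),(\mathbf{W},\mathbf{H})\in F_K\}$, and the JD+NMF solution set is $\dot\Omega=\{(\dot\Phi,\dot{\mathbf{W}},\dot{\mathbf{H}}):\dot\Phi\in\arg\min_{\Phi\in\mathcal{O}(M)}L_S(\Phi),\ (\dot{\mathbf{W}},\dot{\mathbf{H}})\in\arg\min_{(\mathbf{W},\mathbf{H})\in F_K}C_S(\dot\Phi,\mathbf{W},\mathbf{H})\}$. *)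

theory Defs
  imports "HOL-Analysis.Analysis"
begin

text \<open>Dimensions M, N, K are the cardinalities of the finite index types 'm, 'n, 'k.
  The data Y^(1),...,Y^(S) are given by Y :: nat => real^'n^'m, indexed by s in {1..S}.\<close>

definition ES :: "nat \<Rightarrow> (nat \<Rightarrow> real^'n^'m) \<Rightarrow> real^'m^'m \<Rightarrow> 'm \<Rightarrow> 'n \<Rightarrow> real" where
  "ES S Y \<Phi> m n = (1 / real S) * (\<Sum>s\<in>{1..S}. ((\<Phi> ** Y s) $ m $ n)^2)"

definition FK :: "((real^'k^'m) \<times> (real^'n^'k)) set" where
  "FK = {(W, H). (\<forall>i j. 0 \<le> W $ i $ j) \<and> (\<forall>i j. 0 \<le> H $ i $ j)
                 \<and> (\<forall>k. (\<Sum>m\<in>UNIV. \<bar>W $ m $ k\<bar>) = 1)}"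

definition CS :: "real \<Rightarrow> nat \<Rightarrow> (nat \<Rightarrow> real^'n^'m) \<Rightarrow> real^'m^'m \<Rightarrow> real^'k^'m \<Rightarrow> real^'n^'k \<Rightarrow> real" where
  "CS eps0 S Y \<Phi> W H = (\<Sum>m\<in>UNIV. \<Sum>n\<in>UNIV.
      (ES S Y \<Phi> m n + eps0) / ((W ** H) $ m $ n + eps0) + ln ((W ** H) $ m $ n + eps0))"

definition LS :: "real \<Rightarrow> nat \<Rightarrow> (nat \<Rightarrow> real^'n^'m) \<Rightarrow> real^'m^'m \<Rightarrow> real" where
  "LS eps0 S Y \<Phi> = real (CARD('m) * CARD('n)) + (\<Sum>m\<in>UNIV. \<Sum>n\<in>UNIV. ln (ES S Y \<Phi> m n + eps0))"

definition argmin_on :: "('a \<Rightarrow> real) \<Rightarrow> 'a set \<Rightarrow> 'a set" where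
  "argmin_on f A = {x \<in> A. \<forall>y\<in>A. f x \<le> f y}"

definition OM :: "(real^'m^'m) set" where
  "OM = {\<Phi>. orthogonal_matrix \<Phi>}"

definition Omega_star :: "real \<Rightarrow> nat \<Rightarrow> (nat \<Rightarrow> real^'n^'m)
     \<Rightarrow> ((real^'m^'m) \<times> (real^'k^'m) \<times> (real^'n^'k)) set" where
  "Omega_star eps0 S Y = argmin_on (\<lambda>(\<Phi>, W, H). CS eps0 S Y \<Phi> W H)
       {(\<Phi>, W, H). \<Phi> \<in> OM \<and> (W, H) \<in> FK}"

definition Omega_dot :: "real \<Rightarrow> nat \<Rightarrow> (nat \<Rightarrow> real^'n^'m)
     \<Rightarrow> ((real^'m^'m) \<times> (real^'k^'m) \<times> (real^'n^'k)) set" where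
  "Omega_dot eps0 S Y = {(\<Phi>, W, H). \<Phi> \<in> argmin_on (LS eps0 S Y) OM
       \<and> (W, H) \<in> argmin_on (\<lambda>(W', H'). CS eps0 S Y \<Phi> W' H') FK}"

end

theory Submission
  imports Defs
begin

text \<open>Both solution sets are argmin sets of continuous costs over closed feasible sets, so it
  suffices that the relevant sublevel sets are bounded. \<open>\<O>(M)\<close> is compact. On \<open>F\<^sub>K\<close> every
  summand of \<open>C\<^sub>S\<close> is at least \<open>ln([WH]\<^sub>m\<^sub>n + \<epsilon>\<^sub>0) \<ge> ln \<epsilon>\<^sub>0\<close>, so a bound on \<open>C\<^sub>S\<close> bounds every
  entry of \<open>WH\<close>; since the columns of \<open>W\<close> sum to one, \<open>WH\<close> has the same total mass as \<open>H\<close>,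
  which bounds \<open>H\<close>, while \<open>W\<close> is bounded anyway. For the JD+NMF set the inner minimisation
  runs fibrewise over the compact set of minimisers of \<open>L\<^sub>S\<close>; the bound is uniform because
  the cost at a fixed feasible \<open>(W, H)\<close> is continuous, hence bounded, in \<open>\<Phi>\<close>.\<close>

lemma argmin_on_nonempty_compact:
  fixes f :: "'a::heine_borel \<Rightarrow> real"
  assumes "closed D" and "continuous_on D f" and "x0 \<in> D"
    and "bounded {x \<in> D. f x \<le> f x0}"
  shows "argmin_on f D \<noteq> {} \<and> compact (argmin_on f D)"
proof -
  have closed_sublevel: "closed {x \<in> D. f x \<le> c}" for c
    by (rule continuous_on_closed_Collect_le[OF assms(2) continuous_on_const assms(1)])
  let ?K = "{x \<in> D. f x \<le> f x0}"
  have K_compact: "compact ?K"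
    using closed_sublevel assms(4) by (simp add: compact_eq_bounded_closed)
  have K_nonempty: "?K \<noteq> {}"
    using assms(3) by blast
  have K_cont: "continuous_on ?K f"
    by (rule continuous_on_subset[OF assms(2)]) blast
  obtain x where x: "x \<in> ?K" and min: "\<forall>y\<in>?K. f x \<le> f y"
    using continuous_attains_inf[OF K_compact K_nonempty K_cont] by blast
  have "f x \<le> f z" if "z \<in> D" for z
    using min that x by (cases "f z \<le> f x0") auto
  then have argmin: "argmin_on f D = {y \<in> D. f y \<le> f x}"
    using x unfolding argmin_on_def by (auto intro: order_trans)
  have "bounded {y \<in> D. f y \<le> f x}"
    by (rule bounded_subset[OF assms(4)]) (use x in auto)
  then have "compact {y \<in> D. f y \<le> f x}"
    using closed_sublevel by (simp add: compact_eq_bounded_closed)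
  with x show ?thesis
    unfolding argmin by blast
qed

lemma argmin_on_fibres_nonempty_compact:
  fixes F :: "'a::heine_borel \<times> 'b::heine_borel \<Rightarrow> real"
  assumes "compact P" and "P \<noteq> {}" and "closed B" and "y0 \<in> B"
    and cont: "continuous_on (P \<times> B) F"
    and sublevel_bounded: "\<And>C. bounded {y \<in> B. \<exists>x\<in>P. F (x, y) \<le> C}"
  defines "A \<equiv> {(x, y). x \<in> P \<and> y \<in> argmin_on (\<lambda>y. F (x, y)) B}"
  shows "A \<noteq> {} \<and> compact A"
proof -
  have fibre_cont: "continuous_on B (\<lambda>y. F (x, y))" if "x \<in> P" for x
    by (rule continuous_on_compose2[OF cont], intro continuous_intros) (use that in auto)
  obtain x where "x \<in> P"
    using \<open>P \<noteq> {}\<close> by blast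
  have "bounded {y \<in> B. F (x, y) \<le> F (x, y0)}"
    by (rule bounded_subset[OF sublevel_bounded[of "F (x, y0)"]]) (use \<open>x \<in> P\<close> in auto)
  then obtain y where "y \<in> argmin_on (\<lambda>y. F (x, y)) B"
    using argmin_on_nonempty_compact[OF \<open>closed B\<close> fibre_cont[OF \<open>x \<in> P\<close>] \<open>y0 \<in> B\<close>] by blast
  with \<open>x \<in> P\<close> have "A \<noteq> {}"
    unfolding A_def by blast
  have "continuous_on P (\<lambda>x. F (x, y0))"
    by (rule continuous_on_compose2[OF cont], intro continuous_intros) (use \<open>y0 \<in> B\<close> in auto)
  then have "bounded ((\<lambda>x. F (x, y0)) ` P)"
    using \<open>compact P\<close> by (simp add: compact_continuous_image compact_imp_bounded)
  then obtain C where C: "\<forall>x\<in>P. F (x, y0) \<le> C"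
    unfolding bounded_real by (meson abs_le_D1 imageI)
  have "A \<subseteq> P \<times> {y \<in> B. \<exists>x\<in>P. F (x, y) \<le> C}"
  proof (rule subrelI)
    fix x y assume "(x, y) \<in> A"
    then have "x \<in> P" "y \<in> B" "F (x, y) \<le> F (x, y0)"
      using \<open>y0 \<in> B\<close> unfolding A_def argmin_on_def by auto
    then show "(x, y) \<in> P \<times> {y \<in> B. \<exists>x\<in>P. F (x, y) \<le> C}"
      using C by force
  qed
  then have "bounded A"
    by (rule bounded_subset[OF bounded_Times[OF compact_imp_bounded[OF \<open>compact P\<close>] sublevel_bounded]])
  have PB: "closed (P \<times> B)"
    by (rule closed_Times[OF compact_imp_closed[OF \<open>compact P\<close>] \<open>closed B\<close>])
  have "closed {z \<in> P \<times> B. F z \<le> F (fst z, y')}" if "y' \<in> B" for y'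
  proof (rule continuous_on_closed_Collect_le[OF cont _ PB])
    show "continuous_on (P \<times> B) (\<lambda>z. F (fst z, y'))"
      by (rule continuous_on_compose2[OF cont], intro continuous_intros) (use that in auto)
  qed
  moreover have "A = (P \<times> B) \<inter> (\<Inter>y'\<in>B. {z \<in> P \<times> B. F z \<le> F (fst z, y')})"
    unfolding A_def argmin_on_def by auto
  ultimately have "closed A"
    using PB by (simp add: closed_INT closed_Int)
  show ?thesis
    using \<open>A \<noteq> {}\<close> \<open>bounded A\<close> \<open>closed A\<close> by (simp add: compact_eq_bounded_closed)
qed

lemma norm_orthogonal_matrix:
  fixes \<Phi> :: "real^'m^'m"
  assumes "orthogonal_matrix \<Phi>"
  shows "norm \<Phi> = sqrt (real CARD('m))"
proof -
  have "norm (\<Phi> $ i) = 1" for i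
    using assms orthogonal_matrix_orthonormal_rows[of \<Phi>] by (simp add: row_def)
  then show ?thesis
    by (simp add: norm_vec_def L2_set_constant)
qed

lemma compact_orthogonal_matrices: "compact (OM :: (real^'m^'m) set)"
proof -
  have "continuous_on UNIV (\<lambda>\<Phi>::real^'m^'m. transpose \<Phi> ** \<Phi>)"
    unfolding matrix_matrix_mult_def transpose_def by (intro continuous_intros)
  then have "closed (OM :: (real^'m^'m) set)"
    unfolding OM_def orthogonal_matrix by (simp add: closed_Collect_eq continuous_on_const)
  moreover have "OM \<subseteq> cball (0 :: real^'m^'m) (sqrt (real CARD('m)))"
    unfolding OM_def by (auto simp: norm_orthogonal_matrix)
  ultimately show ?thesis
    by (meson bounded_cball bounded_subset compact_eq_bounded_closed)
qed

lemma norm_matrix_le_sum_abs: "norm (A :: real^'n^'m) \<le> (\<Sum>i\<in>UNIV. \<Sum>j\<in>UNIV. \<bar>A $ i $ j\<bar>)"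
proof -
  have "norm A \<le> (\<Sum>i\<in>UNIV. norm (A $ i))"
    by (simp add: norm_vec_def L2_set_le_sum)
  also have "\<dots> \<le> (\<Sum>i\<in>UNIV. \<Sum>j\<in>UNIV. \<bar>A $ i $ j\<bar>)"
    by (intro sum_mono norm_le_l1_cart)
  finally show ?thesis .
qed

lemma matrix_matrix_mult_nth: "(A ** B) $ i $ j = (\<Sum>k\<in>UNIV. A $ i $ k * B $ k $ j)"
  by (simp add: matrix_matrix_mult_def)

lemma closed_FK: "closed (FK :: ((real^'k^'m) \<times> (real^'n^'k)) set)"
proof -
  have "FK = {p :: (real^'k^'m) \<times> (real^'n^'k). (\<forall>i j. 0 \<le> fst p $ i $ j)
      \<and> (\<forall>i j. 0 \<le> snd p $ i $ j) \<and> (\<forall>k. (\<Sum>m\<in>UNIV. \<bar>fst p $ m $ k\<bar>) = 1)}"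
    unfolding FK_def by auto
  also have "closed \<dots>"
    by (intro closed_Collect_conj closed_Collect_all closed_Collect_le closed_Collect_eq
        continuous_intros)
  finally show ?thesis .
qed

lemma FK_product_nonneg: "(W, H) \<in> FK \<Longrightarrow> 0 \<le> (W ** H) $ m $ n"
  unfolding FK_def matrix_matrix_mult_nth by (auto intro!: sum_nonneg)

lemma FK_sum_product_entries:
  assumes "(W :: real^'k^'m, H :: real^'n^'k) \<in> FK"
  shows "(\<Sum>m\<in>UNIV. \<Sum>n\<in>UNIV. (W ** H) $ m $ n) = (\<Sum>k\<in>UNIV. \<Sum>n\<in>UNIV. H $ k $ n)"
proof -
  have column_sum: "(\<Sum>m\<in>UNIV. W $ m $ k) = 1" for k
    using assms unfolding FK_def by auto
  have "(\<Sum>m\<in>UNIV. \<Sum>n\<in>UNIV. (W ** H) $ m $ n)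
      = (\<Sum>m\<in>UNIV. \<Sum>k\<in>UNIV. \<Sum>n\<in>UNIV. W $ m $ k * H $ k $ n)"
    unfolding matrix_matrix_mult_nth by (intro sum.cong refl) (rule sum.swap)
  also have "\<dots> = (\<Sum>k\<in>UNIV. \<Sum>n\<in>UNIV. \<Sum>m\<in>UNIV. W $ m $ k * H $ k $ n)"
    by (subst sum.swap) (intro sum.cong refl, rule sum.swap)
  also have "\<dots> = (\<Sum>k\<in>UNIV. \<Sum>n\<in>UNIV. H $ k $ n)"
    by (simp add: sum_distrib_right[symmetric] column_sum)
  finally show ?thesis .
qed

lemma ES_nonneg: "0 \<le> ES S Y \<Phi> m n"
  unfolding ES_def by (intro mult_nonneg_nonneg sum_nonneg) auto

lemma ln_product_entry_le_CS:
  fixes \<Phi> :: "real^'m^'m" and W :: "real^'k^'m" and H :: "real^'n^'k"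
  assumes "eps0 > 0" and nonneg: "\<forall>m n. 0 \<le> (W ** H) $ m $ n"
  shows "ln ((W ** H) $ i $ j + eps0) + (real (CARD('m) * CARD('n)) - 1) * ln eps0
    \<le> CS eps0 S Y \<Phi> W H"
proof -
  \<comment> \<open>the summands of \<open>C\<^sub>S\<close>, shifted by \<open>ln \<epsilon>\<^sub>0\<close> so that they are nonnegative\<close>
  define g where "g m n = (ES S Y \<Phi> m n + eps0) / ((W ** H) $ m $ n + eps0)
    + ln ((W ** H) $ m $ n + eps0) - ln eps0" for m n
  have ln_le_g: "ln ((W ** H) $ m $ n + eps0) - ln eps0 \<le> g m n" for m n
    unfolding g_def using ES_nonneg[of S Y \<Phi> m n] nonneg \<open>eps0 > 0\<close>
    by (simp add: add_nonneg_pos)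
  have ln_eps0_le: "ln eps0 \<le> ln ((W ** H) $ m $ n + eps0)" for m n
    using nonneg[rule_format, of m n] \<open>eps0 > 0\<close> by (subst ln_le_cancel_iff) auto
  have g_nonneg: "0 \<le> g m n" for m n
    using ln_le_g[of m n] ln_eps0_le[of m n] by linarith
  have "g i j \<le> (\<Sum>m\<in>UNIV. \<Sum>n\<in>UNIV. g m n)"
    using member_le_sum[of i UNIV "\<lambda>m. \<Sum>n\<in>UNIV. g m n"]
      member_le_sum[of j UNIV "g i"] g_nonneg by (simp add: sum_nonneg)
  also have "\<dots> = CS eps0 S Y \<Phi> W H - real (CARD('m) * CARD('n)) * ln eps0"
    unfolding CS_def g_def by (simp add: sum_subtractf)
  finally show ?thesis
    using ln_le_g[of i j] by (simp add: algebra_simps)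
qed

lemma bounded_FK_sublevel:
  assumes "eps0 > 0"
  shows "bounded {p \<in> (FK :: ((real^'k^'m) \<times> (real^'n^'k)) set).
    \<exists>\<Phi> :: real^'m^'m. CS eps0 S Y \<Phi> (fst p) (snd p) \<le> C}"
proof -
  define E where "E = exp (C - (real (CARD('m) * CARD('n)) - 1) * ln eps0)"
  have "norm W \<le> real CARD('k) \<and> norm H \<le> real (CARD('m) * CARD('n)) * E"
    if FK: "(W :: real^'k^'m, H :: real^'n^'k) \<in> FK" and CS: "CS eps0 S Y \<Phi> W H \<le> C"
    for W H and \<Phi> :: "real^'m^'m"
  proof
    have W_nonneg: "0 \<le> W $ i $ k" and H_nonneg: "0 \<le> H $ k $ j"
      and column_sum: "(\<Sum>m\<in>UNIV. W $ m $ k) = 1" for i j k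
      using FK unfolding FK_def by auto
    have "norm W \<le> (\<Sum>m\<in>UNIV. \<Sum>k\<in>UNIV. W $ m $ k)"
      using norm_matrix_le_sum_abs[of W] W_nonneg by simp
    also have "\<dots> = real CARD('k)"
      by (subst sum.swap) (simp add: column_sum)
    finally show "norm W \<le> real CARD('k)" .
    have product_nonneg: "\<forall>m n. 0 \<le> (W ** H) $ m $ n"
      using FK_product_nonneg[OF FK] by blast
    have product_le: "(W ** H) $ m $ n \<le> E" for m n
    proof -
      have "ln ((W ** H) $ m $ n + eps0) \<le> C - (real (CARD('m) * CARD('n)) - 1) * ln eps0"
        using ln_product_entry_le_CS[OF assms product_nonneg, of m n S Y \<Phi>] CS by linarith
      then have "(W ** H) $ m $ n + eps0 \<le> E"
        unfolding E_def using product_nonneg assms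
        by (metis add_nonneg_pos exp_le_cancel_iff exp_ln)
      then show ?thesis
        using assms by linarith
    qed
    have "norm H \<le> (\<Sum>k\<in>UNIV. \<Sum>n\<in>UNIV. H $ k $ n)"
      using norm_matrix_le_sum_abs[of H] H_nonneg by simp
    also have "\<dots> = (\<Sum>m\<in>UNIV. \<Sum>n\<in>UNIV. (W ** H) $ m $ n)"
      by (rule FK_sum_product_entries[OF FK, symmetric])
    also have "\<dots> \<le> (\<Sum>m\<in>(UNIV :: 'm set). \<Sum>n\<in>(UNIV :: 'n set). E)"
      by (intro sum_mono product_le)
    finally show "norm H \<le> real (CARD('m) * CARD('n)) * E"
      by simp
  qed
  then have "{p \<in> (FK :: ((real^'k^'m) \<times> (real^'n^'k)) set).
      \<exists>\<Phi> :: real^'m^'m. CS eps0 S Y \<Phi> (fst p) (snd p) \<le> C}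
    \<subseteq> cball 0 (real CARD('k)) \<times> cball 0 (real (CARD('m) * CARD('n)) * E)"
    by force
  then show ?thesis
    by (rule bounded_subset[OF bounded_Times[OF bounded_cball bounded_cball]])
qed

lemma continuous_on_CS:
  assumes "eps0 > 0"
  shows "continuous_on (UNIV \<times> (FK :: ((real^'k^'m) \<times> (real^'n^'k)) set))
    (\<lambda>(\<Phi> :: real^'m^'m, W, H). CS eps0 S Y \<Phi> W H)"
  unfolding case_prod_unfold
proof -
  let ?D = "UNIV \<times> (FK :: ((real^'k^'m) \<times> (real^'n^'k)) set) :: ((real^'m^'m) \<times> _) set"
  have "\<forall>z\<in>?D. (fst (snd z) ** snd (snd z)) $ m $ n + eps0 \<noteq> 0" for m n
  proof
    fix z assume "z \<in> ?D"
    then have "0 \<le> (fst (snd z) ** snd (snd z)) $ m $ n"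
      by (intro FK_product_nonneg) (auto simp: mem_Times_iff)
    then show "(fst (snd z) ** snd (snd z)) $ m $ n + eps0 \<noteq> 0"
      using assms by linarith
  qed
  moreover have "continuous_on ?D (\<lambda>z. fst (snd z) ** snd (snd z))"
    unfolding matrix_matrix_mult_def by (intro continuous_intros)
  moreover have "continuous_on ?D (\<lambda>z. ES S Y (fst z) m n)" for m n
    unfolding ES_def matrix_matrix_mult_def by (intro continuous_intros)
  ultimately show "continuous_on ?D (\<lambda>z. CS eps0 S Y (fst z) (fst (snd z)) (snd (snd z)))"
    unfolding CS_def by (intro continuous_intros) auto
qed

lemma continuous_on_LS:
  assumes "eps0 > 0"
  shows "continuous_on A (LS eps0 S Y)"
proof -
  have "ES S Y \<Phi> m n + eps0 \<noteq> 0" for \<Phi> m n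
    using ES_nonneg[of S Y \<Phi> m n] assms by linarith
  moreover have "continuous_on A (\<lambda>\<Phi>. ES S Y \<Phi> m n)" for m n
    unfolding ES_def matrix_matrix_mult_def by (intro continuous_intros)
  ultimately show ?thesis
    unfolding LS_def by (intro continuous_intros) auto
qed

lemma uniform_zero_in_FK: "((\<chi> i k. 1 / real CARD('m)) :: real^'k^'m, 0 :: real^'n^'k) \<in> FK"
  unfolding FK_def by simp

lemma identity_in_OM: "mat 1 \<in> OM"
  unfolding OM_def by (simp add: orthogonal_matrix_id)

lemma Omega_star_nonempty_compact:
  assumes "eps0 > 0"
  shows "(Omega_star eps0 S Y :: ((real^'m^'m) \<times> (real^'k^'m) \<times> (real^'n^'k)) set) \<noteq> {}
    \<and> compact (Omega_star eps0 S Y :: ((real^'m^'m) \<times> (real^'k^'m) \<times> (real^'n^'k)) set)"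
proof -
  let ?F = "\<lambda>(\<Phi>, W :: real^'k^'m, H). CS eps0 S Y \<Phi> W H"
  let ?z0 = "(mat 1 :: real^'m^'m, (\<chi> i k. 1 / real CARD('m)) :: real^'k^'m, 0 :: real^'n^'k)"
  have Omega_star_eq: "Omega_star eps0 S Y = argmin_on ?F (OM \<times> FK)"
    unfolding Omega_star_def by (rule arg_cong[where f = "argmin_on ?F"]) auto
  have "argmin_on ?F (OM \<times> FK) \<noteq> {} \<and> compact (argmin_on ?F (OM \<times> FK))"
  proof (rule argmin_on_nonempty_compact)
    show "closed (OM \<times> FK)"
      by (intro closed_Times compact_imp_closed compact_orthogonal_matrices closed_FK)
    show "continuous_on (OM \<times> FK) ?F"
      by (rule continuous_on_subset[OF continuous_on_CS[OF assms]]) auto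
    show "?z0 \<in> OM \<times> FK"
      using identity_in_OM uniform_zero_in_FK by simp
    have "{z \<in> OM \<times> FK. ?F z \<le> ?F ?z0}
      \<subseteq> OM \<times> {p \<in> FK. \<exists>\<Phi>. CS eps0 S Y \<Phi> (fst p) (snd p) \<le> ?F ?z0}"
      by auto
    then show "bounded {z \<in> OM \<times> FK. ?F z \<le> ?F ?z0}"
      by (rule bounded_subset[OF bounded_Times[OF compact_imp_bounded[OF compact_orthogonal_matrices]
            bounded_FK_sublevel[OF assms]]])
  qed
  then show ?thesis
    unfolding Omega_star_eq .
qed

lemma Omega_dot_nonempty_compact:
  assumes "eps0 > 0"
  shows "(Omega_dot eps0 S Y :: ((real^'m^'m) \<times> (real^'k^'m) \<times> (real^'n^'k)) set) \<noteq> {}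
    \<and> compact (Omega_dot eps0 S Y :: ((real^'m^'m) \<times> (real^'k^'m) \<times> (real^'n^'k)) set)"
proof -
  let ?F = "\<lambda>(\<Phi>, W :: real^'k^'m, H). CS eps0 S Y \<Phi> W H"
  let ?P = "argmin_on (LS eps0 S Y) (OM :: (real^'m^'m) set)"
  have P: "?P \<noteq> {} \<and> compact ?P"
  proof (rule argmin_on_nonempty_compact)
    show "closed (OM :: (real^'m^'m) set)"
      by (rule compact_imp_closed[OF compact_orthogonal_matrices])
    show "continuous_on OM (LS eps0 S Y)"
      by (rule continuous_on_LS[OF assms])
    show "mat 1 \<in> OM"
      by (rule identity_in_OM)
    show "bounded {\<Phi> \<in> OM. LS eps0 S Y \<Phi> \<le> LS eps0 S Y (mat 1)}"
      by (rule bounded_subset[OF compact_imp_bounded[OF compact_orthogonal_matrices]]) auto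
  qed
  have Omega_dot_eq: "Omega_dot eps0 S Y = {(\<Phi>, p). \<Phi> \<in> ?P \<and> p \<in> argmin_on (\<lambda>p. ?F (\<Phi>, p)) FK}"
    unfolding Omega_dot_def by auto
  have "{(\<Phi>, p). \<Phi> \<in> ?P \<and> p \<in> argmin_on (\<lambda>p. ?F (\<Phi>, p)) FK} \<noteq> {}
    \<and> compact {(\<Phi>, p). \<Phi> \<in> ?P \<and> p \<in> argmin_on (\<lambda>p. ?F (\<Phi>, p)) FK}"
  proof (rule argmin_on_fibres_nonempty_compact)
    show "compact ?P" and "?P \<noteq> {}"
      using P by simp_all
    show "closed FK"
      by (rule closed_FK)
    show "((\<chi> i k. 1 / real CARD('m)) :: real^'k^'m, 0 :: real^'n^'k) \<in> FK"
      by (rule uniform_zero_in_FK)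
    show "continuous_on (?P \<times> FK) ?F"
      by (rule continuous_on_subset[OF continuous_on_CS[OF assms]]) auto
    show "bounded {p \<in> FK. \<exists>\<Phi>\<in>?P. ?F (\<Phi>, p) \<le> C}" for C
      by (rule bounded_subset[OF bounded_FK_sublevel[OF assms, of S Y C]]) (auto simp: case_prod_unfold)
  qed
  then show ?thesis
    unfolding Omega_dot_eq .
qed

theorem theorem1:
  fixes eps0 :: real and S :: nat and Y :: "nat \<Rightarrow> real^'n^'m"
  assumes "S > 0" and "eps0 > 0"
  shows "(Omega_star eps0 S Y :: ((real^'m^'m) \<times> (real^'k^'m) \<times> (real^'n^'k)) set) \<noteq> {}
       \<and> compact (Omega_star eps0 S Y :: ((real^'m^'m) \<times> (real^'k^'m) \<times> (real^'n^'k)) set)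
       \<and> (Omega_dot eps0 S Y :: ((real^'m^'m) \<times> (real^'k^'m) \<times> (real^'n^'k)) set) \<noteq> {}
       \<and> compact (Omega_dot eps0 S Y :: ((real^'m^'m) \<times> (real^'k^'m) \<times> (real^'n^'k)) set)"
  using Omega_star_nonempty_compact[OF assms(2)] Omega_dot_nonempty_compact[OF assms(2)] by blast

end
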